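(* Define $d_1=d_2=5/36$ and, for $l\ge 2$, $d_{l+1} = d_l + \sum_{i=1}^{l-1} \frac{d_i d_{l-i}}{(l+1)\binom{l}{i}}$. Then $\frac{1}{2\pi}-d_l = O(1/l)$ as $l\to\infty$.
   Context: It is known (Wright; Voblyi) that $(d_l)$ is increasing and converges to $1/(2\pi)$. *)

theory Defs
  imports "HOL-Analysis.Analysis" "HOL-Library.Landau_Symbols"
begin

text \<open>The value at index 0 is an irrelevant convention (set to 0).\<close>

function dseq :: "nat \<Rightarrow> real" where
  "dseq l = (if l = 0 then 0
             else if l \<le> 2 then 5/36
             else dseq (l - 1) +
                  (\<Sum>i\<in>{1..l-2}. dseq i * dseq (l - 1 - i) /
                       (real l * real ((l - 1) choose i))))"
  by pat_completeness auto
termination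
  by (relation "Wellfounded.measure id") auto

end

theory Submission
  imports Defs "HOL-Real_Asymp.Real_Asymp" "HOL-Computational_Algebra.Formal_Power_Series"
begin

text \<open>
  Put \<open>f\<^sub>n = n! d\<^sub>n\<close>. The recurrence says that \<open>F = \<Sum> f\<^sub>n x\<^sup>n\<close> solves the Riccati
  equation \<open>F = x (5/36 + F + x F' + F\<^sup>2)\<close>. The substitution \<open>F = x W'/W\<close> linearises it, and
  the linear equation is solved by \<open>W = \<Sum> w\<^sub>n x\<^sup>n\<close> with \<open>w\<^sub>n = (1/6)\<^sub>n (5/6)\<^sub>n / n!\<close>.
  Accordingly \<open>G = x W' - F W\<close> satisfies \<open>G = x (x G' + G + F G)\<close> and therefore vanishes,
  i.e. \<open>n w\<^sub>n = \<Sum>\<^sub>i f\<^sub>i w\<^sub>n\<^sub>-\<^sub>i\<close>.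
  Dividing by \<open>n!\<close> and writing \<open>v\<^sub>n = w\<^sub>n / (n-1)!\<close> gives
  \<open>d\<^sub>n = v\<^sub>n - (1/n) \<Sum>\<^sub>i\<^sub>=\<^sub>1\<^sup>n\<^sup>-\<^sup>1 d\<^sub>i v\<^sub>n\<^sub>-\<^sub>i / C(n-1,i)\<close>.
  Since \<open>v\<^sub>n\<^sub>+\<^sub>1 / v\<^sub>n = 1 + (5/36)/(n(n+1))\<close>, the sequence \<open>v\<^sub>n\<close> increases to
  \<open>1/(\<Gamma>(1/6) \<Gamma>(5/6)) = 1/(2\<pi>)\<close> at rate \<open>O(1/n)\<close>. Hence \<open>0 \<le> d\<^sub>n \<le> 1/(2\<pi>)\<close>, and the
  correction term is \<open>O(1/n)\<close> because \<open>\<Sum>\<^sub>i 1/C(m,i) \<le> 2\<close>.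
\<close>

lemma Gamma_reflection_real:
  fixes x :: real
  shows "Gamma x * Gamma (1 - x) = pi / sin (pi * x)"
proof -
  have "complex_of_real (Gamma x * Gamma (1 - x)) = complex_of_real (pi / sin (pi * x))"
    using Gamma_reflection_complex[of "complex_of_real x"]
    by (simp flip: Gamma_complex_of_real sin_of_real)
  then show ?thesis
    by (simp only: of_real_eq_iff)
qed

lemma pochhammer_reflection_LIMSEQ:
  fixes a :: real
  assumes "0 < a" "a < 1"
  shows "(\<lambda>n. pochhammer a n * pochhammer (1 - a) n / (fact n * fact (n - 1)))
           \<longlonglongrightarrow> sin (pi * a) / pi"
proof -
  have "(\<lambda>n. inverse (Gamma_series' a n * Gamma_series' (1 - a) n))
          \<longlonglongrightarrow> inverse (Gamma a * Gamma (1 - a))"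
    using assms Gamma_real_pos[of a] Gamma_real_pos[of "1 - a"]
    by (intro tendsto_intros Gamma_series'_LIMSEQ) (simp_all add: less_imp_neq[symmetric])
  moreover have "eventually (\<lambda>n. inverse (Gamma_series' a n * Gamma_series' (1 - a) n)
      = pochhammer a n * pochhammer (1 - a) n / (fact n * fact (n - 1))) sequentially"
    using eventually_gt_at_top[of 0]
  proof eventually_elim
    case (elim n)
    have "exp (a * ln (real n)) * exp ((1 - a) * ln (real n)) = real n"
      using elim by (simp flip: exp_add add: algebra_simps)
    moreover have "fact n = real n * (fact (n - 1) :: real)"
      using elim by (metis fact_num_eq_if not_gr0)
    ultimately show ?case
      by (simp add: Gamma_series'_def field_simps)
  qed
  ultimately show ?thesis
    by (simp add: Gamma_reflection_real tendsto_cong)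
qed

definition wseq :: "nat \<Rightarrow> real" where
  "wseq n = pochhammer (1/6) n * pochhammer (5/6) n / fact n"

definition vseq :: "nat \<Rightarrow> real" where
  "vseq n = wseq n / fact (n - 1)"

lemma wseq_nonneg: "wseq n \<ge> 0"
  unfolding wseq_def by (intro divide_nonneg_pos mult_nonneg_nonneg pochhammer_nonneg) auto

lemma vseq_nonneg: "vseq n \<ge> 0"
  unfolding vseq_def by (simp add: wseq_nonneg)

lemma wseq_Suc: "real (Suc n) * wseq (Suc n) = (real n ^ 2 + real n + 5/36) * wseq n"
proof -
  have "real n ^ 2 + real n + 5/36 = (1/6 + real n) * (5/6 + real n)"
    by (simp add: field_simps power2_eq_square)
  then show ?thesis
    unfolding wseq_def pochhammer_Suc fact_Suc by (simp del: of_nat_Suc)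
qed

lemma vseq_Suc:
  assumes "n \<ge> 1"
  shows "vseq (Suc n) = vseq n * (1 + (5/36) / (real n * real (Suc n)))"
proof -
  have n: "real n > 0"
    using assms by simp
  have "fact n = real n * (fact (n - 1) :: real)"
    using assms by (metis fact_num_eq_if not_one_le_zero)
  then have "vseq (Suc n) = real (Suc n) * wseq (Suc n) / (real (Suc n) * real n * fact (n - 1))"
    by (simp add: vseq_def del: of_nat_Suc)
  also have "\<dots> = vseq n * ((real n ^ 2 + real n + 5/36) / (real n * real (Suc n)))"
    unfolding wseq_Suc vseq_def by (simp add: ac_simps del: of_nat_Suc)
  also have "real n ^ 2 + real n + 5/36 = real n * real (Suc n) + 5/36"
    by (simp add: algebra_simps power2_eq_square)
  also have "(real n * real (Suc n) + 5/36) / (real n * real (Suc n)) = 1 + (5/36) / (real n * real (Suc n))"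
    using n by (simp add: add_divide_distrib del: of_nat_Suc)
  finally show ?thesis .
qed

lemma vseq_LIMSEQ: "vseq \<longlonglongrightarrow> 1 / (2 * pi)"
  using pochhammer_reflection_LIMSEQ[of "1/6"]
  by (simp add: vseq_def[abs_def] wseq_def sin_30 mult.commute)

lemma vseq_le_limit:
  assumes "n \<ge> 1"
  shows "vseq n \<le> 1 / (2 * pi)"
proof -
  have "incseq (\<lambda>n. vseq (Suc n))"
  proof (rule incseq_SucI)
    fix k
    show "vseq (Suc k) \<le> vseq (Suc (Suc k))"
      using vseq_Suc[of "Suc k"] vseq_nonneg[of "Suc k"]
      by (simp add: mult_le_cancel_left1 del: of_nat_Suc)
  qed
  moreover have "(\<lambda>n. vseq (Suc n)) \<longlonglongrightarrow> 1 / (2 * pi)"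
    using vseq_LIMSEQ by (rule LIMSEQ_Suc)
  ultimately show ?thesis
    using incseq_le[of _ _ "n - 1"] assms by fastforce
qed

lemma limit_le_vseq_scaled:
  assumes "n \<ge> 1"
  shows "1 / (2 * pi) \<le> vseq n * (real n / (real n - 5/36))"
proof -
  \<comment> \<open>The factor \<open>n/(n - 5/36)\<close> shrinks faster than \<open>v\<^sub>n\<close> grows, so \<open>u\<close> decreases to the same limit.\<close>
  define u where "u n = vseq n * (real n / (real n - 5/36))" for n
  have "u (Suc (Suc k)) \<le> u (Suc k)" for k
  proof -
    define x where "x = real (Suc k)"
    have x: "x \<ge> 1" "x * (x + 1) > 0" "x + 1 - 5/36 > 0"
      by (simp_all add: x_def)
    have "(1 + (5/36) / (x * (x + 1))) * ((x + 1) / (x + 1 - 5/36))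
            = (x * (x + 1) + 5/36) * (x + 1) / (x * (x + 1) * (x + 1 - 5/36))"
      using x by (simp add: field_simps)
    also have "\<dots> \<le> x / (x - 5/36)"
      using x by (simp add: divide_simps) (simp add: algebra_simps)
    finally have "(1 + (5/36) / (x * (x + 1))) * ((x + 1) / (x + 1 - 5/36)) \<le> x / (x - 5/36)" .
    then have "vseq (Suc k) * ((1 + (5/36) / (x * (x + 1))) * ((x + 1) / (x + 1 - 5/36)))
                 \<le> vseq (Suc k) * (x / (x - 5/36))"
      by (rule mult_left_mono) (rule vseq_nonneg)
    moreover have "real (Suc (Suc k)) = x + 1"
      by (simp add: x_def)
    ultimately show ?thesis
      using vseq_Suc[of "Suc k"] unfolding u_def x_def[symmetric] by (simp add: mult.assoc add.commute)
  qed
  then have "decseq (\<lambda>n. u (Suc n))"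
    by (intro decseq_SucI)
  moreover have "(\<lambda>n. real n / (real n - 5/36)) \<longlonglongrightarrow> 1"
    by real_asymp
  then have "(\<lambda>n. u (Suc n)) \<longlonglongrightarrow> 1 / (2 * pi)"
    unfolding u_def using vseq_LIMSEQ by (intro LIMSEQ_Suc) (auto dest: tendsto_mult)
  ultimately show ?thesis
    using decseq_ge[of _ _ "n - 1"] assms by (fastforce simp: u_def)
qed

declare dseq.simps [simp del]

lemma dseq_nonneg: "dseq n \<ge> 0"
proof (induction n rule: less_induct)
  case (less n)
  show ?case
    by (subst dseq.simps)
      (auto intro!: add_nonneg_nonneg sum_nonneg divide_nonneg_nonneg mult_nonneg_nonneg less)
qed

definition dfact :: "nat \<Rightarrow> real" where
  "dfact n = fact n * dseq n"

lemma dfact_0: "dfact 0 = 0"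
  unfolding dfact_def by (subst dseq.simps) simp

lemma dseq_initial: "dseq (Suc 0) = 5/36" "dseq (Suc (Suc 0)) = 5/36"
  by (subst dseq.simps; simp)+

lemma dfact_Suc_0: "dfact (Suc 0) = 5/36"
  by (simp add: dfact_def dseq_initial)

lemma dfact_Suc:
  assumes "l \<ge> 1"
  shows "dfact (Suc l) = real (Suc l) * dfact l + (\<Sum>i=1..l-1. dfact i * dfact (l - i))"
proof (cases "l = 1")
  case True
  then show ?thesis
    by (simp add: dfact_def dseq_initial)
next
  case False
  have rec: "dseq (Suc l) = dseq l + (\<Sum>i=1..l-1. dseq i * dseq (l - i) / (real (Suc l) * real (l choose i)))"
    using assms False by (subst dseq.simps) simp
  have summand: "fact (Suc l) * (dseq i * dseq (l - i) / (real (Suc l) * real (l choose i))) = dfact i * dfact (l - i)"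
    if "i \<in> {1..l-1}" for i
  proof -
    have "i \<le> l"
      using that by auto
    then have "fact i * fact (l - i) * real (l choose i) = (fact l :: real)"
      by (metis binomial_fact_lemma of_nat_fact of_nat_mult)
    moreover have "real (l choose i) > 0"
      using \<open>i \<le> l\<close> by simp
    ultimately show ?thesis
      unfolding dfact_def by (simp add: field_simps del: of_nat_Suc)
  qed
  have "dfact (Suc l) = fact (Suc l) * dseq l
      + (\<Sum>i=1..l-1. fact (Suc l) * (dseq i * dseq (l - i) / (real (Suc l) * real (l choose i))))"
    unfolding dfact_def rec by (simp only: distrib_left sum_distrib_left)
  also have "\<dots> = real (Suc l) * dfact l + (\<Sum>i=1..l-1. dfact i * dfact (l - i))"
    using summand by (simp add: dfact_def)
  finally show ?thesis .
qed

lemma fps_dfact_eq: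
  defines "F \<equiv> Abs_fps dfact"
  shows "F = fps_X * (fps_const (5/36) + F + fps_X * fps_deriv F + F * F)"
proof (rule fps_ext)
  fix n
  show "fps_nth F n = fps_nth (fps_X * (fps_const (5/36) + F + fps_X * fps_deriv F + F * F)) n"
  proof (cases n)
    case 0
    then show ?thesis
      by (simp add: F_def dfact_0)
  next
    case (Suc l)
    have "(\<Sum>i=0..l. dfact i * dfact (l - i)) = (\<Sum>i=1..l-1. dfact i * dfact (l - i))" if "l \<ge> 1"
      using that by (cases l) (simp_all add: sum.atLeast_Suc_atMost dfact_0)
    then show ?thesis
      using Suc dfact_Suc[of l]
      by (cases "l = 0")
        (simp_all add: F_def fps_mult_nth[of "Abs_fps dfact" "Abs_fps dfact"] dfact_0 dfact_Suc_0 algebra_simps)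
  qed
qed

lemma fps_wseq_eq:
  defines "W \<equiv> Abs_fps wseq"
  shows "fps_deriv W = fps_X * (fps_X * fps_deriv (fps_deriv W)) + 2 * (fps_X * fps_deriv W)
                        + fps_const (5/36) * W"
proof (rule fps_ext)
  fix n
  have "fps_nth (fps_X * (fps_X * fps_deriv (fps_deriv W))) n = real n * (real n - 1) * wseq n"
    by (cases n; cases "n - 1") (simp_all add: W_def)
  moreover have "fps_nth (2 * (fps_X * fps_deriv W)) n = 2 * real n * wseq n"
    by (cases n) (simp_all add: W_def numeral_fps_const)
  ultimately show "fps_nth (fps_deriv W) n = fps_nth (fps_X * (fps_X * fps_deriv (fps_deriv W))
                     + 2 * (fps_X * fps_deriv W) + fps_const (5/36) * W) n"
    using wseq_Suc[of n] by (simp add: W_def algebra_simps power2_eq_square)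
qed

lemma fps_eq_0_if_eq_X_times:
  fixes F G :: "'a :: comm_ring_1 fps"
  assumes "G = fps_X * (fps_X * fps_deriv G + G + F * G)"
  shows "G = 0"
proof -
  have "fps_nth G n = 0" for n
  proof (induction n rule: less_induct)
    case (less n)
    show ?case
    proof (cases n)
      case 0
      then show ?thesis
        by (subst assms) simp
    next
      case (Suc k)
      have "fps_nth G n = fps_nth (fps_X * fps_deriv G + G + F * G) k"
        using Suc by (subst assms) simp
      also have "\<dots> = 0"
        using Suc less by (simp add: fps_mult_nth[of F G])
      finally show ?thesis .
    qed
  qed
  then show ?thesis
    by (simp add: fps_ext)
qed

lemma wseq_convolution: "real n * wseq n = (\<Sum>i=0..n. dfact i * wseq (n - i))"
proof -
  define F where "F = Abs_fps dfact"
  define W where "W = Abs_fps wseq"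
  define G where "G = fps_X * fps_deriv W - F * W"
  have F: "F = fps_X * (fps_const (5/36) + F + fps_X * fps_deriv F + F * F)"
    unfolding F_def by (rule fps_dfact_eq)
  have W: "fps_deriv W = fps_X * (fps_X * fps_deriv (fps_deriv W)) + 2 * (fps_X * fps_deriv W)
                          + fps_const (5/36) * W"
    unfolding W_def by (rule fps_wseq_eq)
  have "G = fps_X * (fps_X * fps_deriv G + G + F * G)"
  proof -
    have "fps_deriv G = fps_deriv W + fps_X * fps_deriv (fps_deriv W) - (fps_deriv F * W + F * fps_deriv W)"
      unfolding G_def by (simp add: algebra_simps)
    then show ?thesis
      unfolding G_def using F W by (simp only:) algebra
  qed
  then have "G = 0"
    by (rule fps_eq_0_if_eq_X_times)
  then have "fps_nth G n = 0"
    by simp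
  then show ?thesis
    by (cases n) (simp_all add: G_def F_def W_def fps_mult_nth[of "Abs_fps dfact" "Abs_fps wseq"])
qed

lemma dseq_eq_vseq_minus:
  assumes "n \<ge> 1"
  shows "dseq n = vseq n - (\<Sum>i=1..n-1. dseq i * vseq (n - i) / real (n - 1 choose i)) / real n"
proof -
  obtain m where n: "n = Suc m"
    using assms by (cases n) auto
  have summand: "dfact i * wseq (n - i) / fact m = dseq i * vseq (n - i) / real (m choose i)"
    if "i \<in> {1..m}" for i
  proof -
    have "i \<le> m"
      using that by auto
    then show ?thesis
      by (simp add: n dfact_def vseq_def binomial_fact Suc_diff_le)
  qed
  have "(\<Sum>i=0..n. dfact i * wseq (n - i)) = (\<Sum>i=1..m. dfact i * wseq (n - i)) + dfact n"
    by (simp add: n sum.atLeast0_atMost_Suc sum.atLeast_Suc_atMost dfact_0 wseq_def)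
  then have "dfact n = real n * wseq n - (\<Sum>i=1..m. dfact i * wseq (n - i))"
    using wseq_convolution[of n] by simp
  then have "dseq n = (real n * wseq n - (\<Sum>i=1..m. dfact i * wseq (n - i))) / (real n * fact m)"
    by (simp add: n dfact_def field_simps del: of_nat_Suc)
  also have "\<dots> = vseq n - (\<Sum>i=1..m. dfact i * wseq (n - i) / fact m) / real n"
    by (simp add: n vseq_def field_simps flip: sum_divide_distrib del: of_nat_Suc)
  finally show ?thesis
    using summand by (simp add: n)
qed

lemma sum_inverse_binomial_le_2: "(\<Sum>i=1..m. 1 / real (m choose i)) \<le> 2"
proof (cases m)
  case (Suc k)
  have "(\<Sum>i=1..k. 1 / real (m choose i)) \<le> (\<Sum>i=1..k. 1 / real m)"
  proof (rule sum_mono)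
    fix i
    assume "i \<in> {1..k}"
    then show "1 / real (m choose i) \<le> 1 / real m"
      using upper_le_binomial[of i m] Suc by (intro divide_left_mono) auto
  qed
  also have "\<dots> \<le> 1"
    using Suc by simp
  finally show ?thesis
    using Suc by (simp add: sum.cl_ivl_Suc)
qed simp

lemma dseq_le_limit:
  assumes "n \<ge> 1"
  shows "dseq n \<le> 1 / (2 * pi)"
proof -
  have "(\<Sum>i=1..n-1. dseq i * vseq (n - i) / real (n - 1 choose i)) / real n \<ge> 0"
    by (intro divide_nonneg_nonneg sum_nonneg mult_nonneg_nonneg dseq_nonneg vseq_nonneg) auto
  then show ?thesis
    using dseq_eq_vseq_minus[OF assms] vseq_le_limit[OF assms] by linarith
qed

lemma limit_minus_vseq_le:
  assumes "n \<ge> 1"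
  shows "1 / (2 * pi) - vseq n \<le> 1 / (2 * pi) / (4 * real n)"
proof -
  have n: "real n \<ge> 1"
    using assms by simp
  have "1 / (2 * pi) \<le> vseq n + vseq n * ((5/36) / (real n - 5/36))"
    using limit_le_vseq_scaled[OF assms] n by (simp add: field_simps)
  also have "vseq n * ((5/36) / (real n - 5/36)) \<le> 1 / (2 * pi) * (1 / (4 * real n))"
  proof (rule mult_mono)
    show "(5/36) / (real n - 5/36) \<le> 1 / (4 * real n)"
      using n by (simp add: field_simps)
  qed (use vseq_le_limit[OF assms] vseq_nonneg n in auto)
  finally show ?thesis
    by simp
qed

lemma dseq_vseq_sum_le:
  "(\<Sum>i=1..n-1. dseq i * vseq (n - i) / real (n - 1 choose i)) \<le> 2 * (1 / (2 * pi))\<^sup>2"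
proof -
  have "(\<Sum>i=1..n-1. dseq i * vseq (n - i) / real (n - 1 choose i))
          \<le> (\<Sum>i=1..n-1. (1 / (2 * pi))\<^sup>2 * (1 / real (n - 1 choose i)))"
  proof (rule sum_mono)
    fix i
    assume "i \<in> {1..n-1}"
    then have "dseq i * vseq (n - i) \<le> 1 / (2 * pi) * (1 / (2 * pi))"
      using dseq_le_limit vseq_le_limit dseq_nonneg vseq_nonneg by (intro mult_mono) auto
    then have "dseq i * vseq (n - i) / real (n - 1 choose i)
                 \<le> 1 / (2 * pi) * (1 / (2 * pi)) / real (n - 1 choose i)"
      by (rule divide_right_mono) simp
    then show "dseq i * vseq (n - i) / real (n - 1 choose i) \<le> (1 / (2 * pi))\<^sup>2 * (1 / real (n - 1 choose i))"
      by (simp add: power2_eq_square)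
  qed
  also have "\<dots> = (1 / (2 * pi))\<^sup>2 * (\<Sum>i=1..n-1. 1 / real (n - 1 choose i))"
    by (rule sum_distrib_left[symmetric])
  also have "\<dots> \<le> (1 / (2 * pi))\<^sup>2 * 2"
    by (intro mult_left_mono sum_inverse_binomial_le_2) simp
  finally show ?thesis
    by (simp only: mult.commute)
qed

lemma limit_minus_dseq_le:
  assumes "n \<ge> 1"
  shows "1 / (2 * pi) - dseq n \<le> 1 / real n"
proof -
  define L where "L = 1 / (2 * pi)"
  have L: "0 < L" "L \<le> 1/6"
    using pi_gt3 by (auto simp: L_def field_simps)
  have n: "real n \<ge> 1"
    using assms by simp
  have "L\<^sup>2 \<le> (1/6)\<^sup>2"
    using L by (intro power_mono) auto
  then have "L / 4 + 2 * L\<^sup>2 \<le> 1"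
    using L by (simp add: power_divide)
  then have "L / (4 * real n) + 2 * L\<^sup>2 / real n \<le> 1 / real n"
    using n divide_right_mono[of "L / 4 + 2 * L\<^sup>2" 1 "real n"] by (simp add: add_divide_distrib)
  moreover have "(\<Sum>i=1..n-1. dseq i * vseq (n - i) / real (n - 1 choose i)) / real n \<le> 2 * L\<^sup>2 / real n"
    using dseq_vseq_sum_le[of n] n unfolding L_def by (simp add: divide_right_mono)
  ultimately show ?thesis
    using dseq_eq_vseq_minus[OF assms] limit_minus_vseq_le[OF assms] unfolding L_def by linarith
qed

theorem lemma4p1:
  shows "(\<lambda>l. 1 / (2 * pi) - dseq l) \<in> O(\<lambda>l. 1 / real l)"
proof (rule bigoI[where c = 1])
  show "eventually (\<lambda>l. norm (1 / (2 * pi) - dseq l) \<le> 1 * norm (1 / real l)) at_top"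
    using eventually_ge_at_top[of "1::nat"]
    by eventually_elim (use dseq_le_limit limit_minus_dseq_le in auto)
qed

end
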